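(* (1) Let $W_1=W(\gamma_1^{-1})$. Then $W_1\neq\emptyset$ if and only if $\delta_1=0$ and $f_1\le0$, in which case $\widehat W=W_1=\{(\hat y_1,z_1,\hat z_{(1)}^\top)^\top:z_1^2=-f_1/\gamma_1\}$. (2) Suppose $\gamma_q<0$ and let $W_q=W(\gamma_q^{-1})$. Then $W_q\neq\emptyset$ if and only if $\delta_q=0$ and $f_q\ge0$, in which case $\widehat W=W_q=\{(\hat y_q,\hat z_{(q)}^\top,z_q)^\top:z_q^2=f_q/(-\gamma_q)\}$. (Here the first coordinate $\hat y_1$, resp. $\hat y_q$, is absent when $m_0=0$.)
   Context: Regular dimension-reduced canonical form: $q\ge1$, $\gamma_1>\dots>\gamma_q$ nonzero reals with $\gamma_1>0$, $\Gamma^*=\operatorname{diag}(\gamma_1,\dots,\gamma_q)$, $\delta=(\delta_i)$ with $\delta_i\ge0$, $k^*\in\mathbb{R}$, $\varepsilon\ge0$; either ($m_0=0$) $\varepsilon=0$, $w=z\in\mathbb{R}^q$, $w_0=\delta$, $\Delta=\Gamma^*$, $d=0$; or ($m_0>0$) $\varepsilon>0$, $w=(y,z^\top)^\top\in\mathbb{R}^{q+1}$, $w_0=(0,\delta^\top)^\top$, $\Delta=\operatorname{diag}(0,\Gamma^* )$, $d=\varepsilon e_1$. Problem: minimise $\|w-w_0\|^2$ over $W=\{w:Q^*(w)=0\}\neq\emptyset$, $Q^*(w)=w^\top\Delta w+2d^\top w-k^*$; $\widehat W$ is the set of minimisers. $W(\lambda)$ is the set of $w\in W$ with $(I-\lambda\Delta)w=w_0+\lambda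 d$. Boundary quantities: $\hat y_1=\varepsilon\gamma_1^{-1}$, $\hat z_{(1)}\in\mathbb{R}^{q-1}$ with entries $(1-\gamma_i/\gamma_1)^{-1}\delta_i$, $i=2,\dots,q$, $f_1=\sum_{i=2}^q\gamma_i(\hat z_{(1)})_i^2+2\varepsilon\hat y_1-k^*$; when $\gamma_q<0$: $\hat y_q=\varepsilon\gamma_q^{-1}$, $\hat z_{(q)}\in\mathbb{R}^{q-1}$ with entries $(1-\gamma_i/\gamma_q)^{-1}\delta_i$, $i=1,\dots,q-1$, $f_q=\sum_{i=1}^{q-1}\gamma_i(\hat z_{(q)})_i^2+2\varepsilon\hat y_q-k^*$. *)

theory Defs
  imports Complex_Main
begin

text \<open>Coordinates 1..q are the z-coordinates; coordinate 0 is the y-coordinate, present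
  only in the case m0 > 0, which is exactly the case epsilon > 0.  The ambient space
  is the set of vectors vanishing outside the index set (a copy of R^q resp. R^(q+1)).\<close>

definition idxset :: "real \<Rightarrow> nat \<Rightarrow> nat set" where
  "idxset \<epsilon> q = (if \<epsilon> > 0 then {0..q} else {1..q})"

definition wspace :: "real \<Rightarrow> nat \<Rightarrow> (nat \<Rightarrow> real) set" where
  "wspace \<epsilon> q = {w. \<forall>i. i \<notin> idxset \<epsilon> q \<longrightarrow> w i = 0}"

definition Dlt :: "(nat \<Rightarrow> real) \<Rightarrow> nat \<Rightarrow> real" where
  "Dlt \<gamma> i = (if i = 0 then 0 else \<gamma> i)"

definition dvec :: "real \<Rightarrow> nat \<Rightarrow> real" where
  "dvec \<epsilon> i = (if i = 0 then \<epsilon> else 0)"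

definition w0vec :: "(nat \<Rightarrow> real) \<Rightarrow> nat \<Rightarrow> nat \<Rightarrow> real" where
  "w0vec \<delta> q i = (if 1 \<le> i \<and> i \<le> q then \<delta> i else 0)"

definition Qstar :: "(nat \<Rightarrow> real) \<Rightarrow> real \<Rightarrow> real \<Rightarrow> nat \<Rightarrow> (nat \<Rightarrow> real) \<Rightarrow> real" where
  "Qstar \<gamma> \<epsilon> k q w =
     (\<Sum>i\<in>idxset \<epsilon> q. Dlt \<gamma> i * (w i)\<^sup>2) + 2 * (\<Sum>i\<in>idxset \<epsilon> q. dvec \<epsilon> i * w i) - k"

definition Wset :: "(nat \<Rightarrow> real) \<Rightarrow> real \<Rightarrow> real \<Rightarrow> nat \<Rightarrow> (nat \<Rightarrow> real) set" where
  "Wset \<gamma> \<epsilon> k q = {w \<in> wspace \<epsilon> q. Qstar \<gamma> \<epsilon> k q w = 0}"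

definition objf :: "(nat \<Rightarrow> real) \<Rightarrow> real \<Rightarrow> nat \<Rightarrow> (nat \<Rightarrow> real) \<Rightarrow> real" where
  "objf \<delta> \<epsilon> q w = (\<Sum>i\<in>idxset \<epsilon> q. (w i - w0vec \<delta> q i)\<^sup>2)"

definition What :: "(nat \<Rightarrow> real) \<Rightarrow> (nat \<Rightarrow> real) \<Rightarrow> real \<Rightarrow> real \<Rightarrow> nat \<Rightarrow> (nat \<Rightarrow> real) set" where
  "What \<gamma> \<delta> \<epsilon> k q =
     {w \<in> Wset \<gamma> \<epsilon> k q. \<forall>v \<in> Wset \<gamma> \<epsilon> k q. objf \<delta> \<epsilon> q w \<le> objf \<delta> \<epsilon> q v}"

definition Wlam :: "(nat \<Rightarrow> real) \<Rightarrow> (nat \<Rightarrow> real) \<Rightarrow> real \<Rightarrow> real \<Rightarrow> nat \<Rightarrow> real \<Rightarrow> (nat \<Rightarrow> real) set" where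
  "Wlam \<gamma> \<delta> \<epsilon> k q lam =
     {w \<in> Wset \<gamma> \<epsilon> k q. \<forall>i\<in>idxset \<epsilon> q.
        (1 - lam * Dlt \<gamma> i) * w i = w0vec \<delta> q i + lam * dvec \<epsilon> i}"

definition yhat1 :: "(nat \<Rightarrow> real) \<Rightarrow> real \<Rightarrow> real" where
  "yhat1 \<gamma> \<epsilon> = \<epsilon> * inverse (\<gamma> 1)"

definition zhat1 :: "(nat \<Rightarrow> real) \<Rightarrow> (nat \<Rightarrow> real) \<Rightarrow> nat \<Rightarrow> real" where
  "zhat1 \<gamma> \<delta> i = inverse (1 - \<gamma> i / \<gamma> 1) * \<delta> i"

definition f1 :: "(nat \<Rightarrow> real) \<Rightarrow> (nat \<Rightarrow> real) \<Rightarrow> real \<Rightarrow> real \<Rightarrow> nat \<Rightarrow> real" where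
  "f1 \<gamma> \<delta> \<epsilon> k q =
     (\<Sum>i=2..q. \<gamma> i * (zhat1 \<gamma> \<delta> i)\<^sup>2) + 2 * \<epsilon> * yhat1 \<gamma> \<epsilon> - k"

definition yhatq :: "(nat \<Rightarrow> real) \<Rightarrow> real \<Rightarrow> nat \<Rightarrow> real" where
  "yhatq \<gamma> \<epsilon> q = \<epsilon> * inverse (\<gamma> q)"

definition zhatq :: "(nat \<Rightarrow> real) \<Rightarrow> (nat \<Rightarrow> real) \<Rightarrow> nat \<Rightarrow> nat \<Rightarrow> real" where
  "zhatq \<gamma> \<delta> q i = inverse (1 - \<gamma> i / \<gamma> q) * \<delta> i"

definition fq :: "(nat \<Rightarrow> real) \<Rightarrow> (nat \<Rightarrow> real) \<Rightarrow> real \<Rightarrow> real \<Rightarrow> nat \<Rightarrow> real" where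
  "fq \<gamma> \<delta> \<epsilon> k q =
     (\<Sum>i=1..q-1. \<gamma> i * (zhatq \<gamma> \<delta> q i)\<^sup>2) + 2 * \<epsilon> * yhatq \<gamma> \<epsilon> q - k"

end

theory Submission
  imports Defs
begin

text \<open>For \<open>u \<in> W\<close> and \<open>v \<in> W(\<lambda>)\<close> both points satisfy \<open>Q* = 0\<close> and \<open>v\<close> is a stationary point
  of the Lagrangian \<open>\<parallel>w - w\<^sub>0\<parallel>\<^sup>2 - \<lambda> Q*(w)\<close>, which is quadratic with diagonal Hessian
  \<open>I - \<lambda>\<Delta>\<close>; hence \<open>\<parallel>u - w\<^sub>0\<parallel>\<^sup>2 - \<parallel>v - w\<^sub>0\<parallel>\<^sup>2 = \<Sum>\<^sub>i (1 - \<lambda>\<Delta>\<^sub>i)(u\<^sub>i - v\<^sub>i)\<^sup>2\<close>.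
  For \<open>\<lambda> = \<gamma>\<^sub>1\<^sup>-\<^sup>1\<close>, and for \<open>\<lambda> = \<gamma>\<^sub>q\<^sup>-\<^sup>1\<close> when \<open>\<gamma>\<^sub>q < 0\<close>, all weights \<open>1 - \<lambda>\<Delta>\<^sub>i\<close> are nonnegative,
  so \<open>W(\<lambda>)\<close>, if nonempty, is exactly the set of minimisers.  At \<open>\<lambda> = \<gamma>\<^sub>j\<^sup>-\<^sup>1\<close> the stationarity
  equations force \<open>\<delta>\<^sub>j = 0\<close> and fix every coordinate except \<open>z\<^sub>j\<close>, and the constraint becomes
  \<open>\<gamma>\<^sub>j z\<^sub>j\<^sup>2 + f\<^sub>j = 0\<close>.\<close>

lemma finite_idxset [simp]: "finite (idxset \<epsilon> q)"
  by (simp add: idxset_def)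

lemma Qstar_explicit:
  assumes "\<epsilon> \<ge> 0"
  shows "Qstar \<gamma> \<epsilon> k q w = (\<Sum>i=1..q. \<gamma> i * (w i)\<^sup>2) + 2 * \<epsilon> * w 0 - k"
proof -
  have quad: "(\<Sum>i=1..q. Dlt \<gamma> i * (w i)\<^sup>2) = (\<Sum>i=1..q. \<gamma> i * (w i)\<^sup>2)"
    by (rule sum.cong) (auto simp: Dlt_def)
  have lin: "(\<Sum>i=1..q. dvec \<epsilon> i * w i) = 0"
    by (rule sum.neutral) (auto simp: dvec_def)
  have "{0..q} = insert 0 {1..q}"
    by auto
  then show ?thesis
    using assms quad lin by (cases "\<epsilon> > 0") (auto simp: Qstar_def idxset_def Dlt_def dvec_def)
qed

lemma objf_Lagrangian_diff:
  "objf \<delta> \<epsilon> q u - lam * Qstar \<gamma> \<epsilon> k q u - (objf \<delta> \<epsilon> q v - lam * Qstar \<gamma> \<epsilon> k q v)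
   = (\<Sum>i\<in>idxset \<epsilon> q. (1 - lam * Dlt \<gamma> i) * (u i - v i)\<^sup>2
        + 2 * ((1 - lam * Dlt \<gamma> i) * v i - (w0vec \<delta> q i + lam * dvec \<epsilon> i)) * (u i - v i))"
  unfolding objf_def Qstar_def
  by (simp add: sum_subtractf sum.distrib sum_distrib_left algebra_simps power2_eq_square)

lemma objf_diff_of_Wlam:
  assumes u: "u \<in> Wset \<gamma> \<epsilon> k q" and v: "v \<in> Wlam \<gamma> \<delta> \<epsilon> k q lam"
  shows "objf \<delta> \<epsilon> q u - objf \<delta> \<epsilon> q v = (\<Sum>i\<in>idxset \<epsilon> q. (1 - lam * Dlt \<gamma> i) * (u i - v i)\<^sup>2)"
proof -
  have "Qstar \<gamma> \<epsilon> k q u = 0" "Qstar \<gamma> \<epsilon> k q v = 0"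
    using u v by (simp_all add: Wset_def Wlam_def)
  moreover have "\<forall>i\<in>idxset \<epsilon> q. (1 - lam * Dlt \<gamma> i) * v i = w0vec \<delta> q i + lam * dvec \<epsilon> i"
    using v by (simp add: Wlam_def)
  then have "(\<Sum>i\<in>idxset \<epsilon> q. (1 - lam * Dlt \<gamma> i) * (u i - v i)\<^sup>2
        + 2 * ((1 - lam * Dlt \<gamma> i) * v i - (w0vec \<delta> q i + lam * dvec \<epsilon> i)) * (u i - v i))
      = (\<Sum>i\<in>idxset \<epsilon> q. (1 - lam * Dlt \<gamma> i) * (u i - v i)\<^sup>2)"
    by (intro sum.cong) auto
  ultimately show ?thesis
    using objf_Lagrangian_diff[of \<delta> \<epsilon> q u lam \<gamma> k v] by simp
qed

lemma What_eq_Wlam: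
  assumes nonneg: "\<forall>i\<in>idxset \<epsilon> q. 1 - lam * Dlt \<gamma> i \<ge> 0"
    and "Wlam \<gamma> \<delta> \<epsilon> k q lam \<noteq> {}"
  shows "What \<gamma> \<delta> \<epsilon> k q = Wlam \<gamma> \<delta> \<epsilon> k q lam"
proof
  obtain v where v: "v \<in> Wlam \<gamma> \<delta> \<epsilon> k q lam"
    using assms(2) by blast
  have terms_nonneg: "\<forall>i\<in>idxset \<epsilon> q. 0 \<le> (1 - lam * Dlt \<gamma> i) * (u i - u' i)\<^sup>2" for u u'
    using nonneg by simp
  show "What \<gamma> \<delta> \<epsilon> k q \<subseteq> Wlam \<gamma> \<delta> \<epsilon> k q lam"
  proof
    fix w assume w: "w \<in> What \<gamma> \<delta> \<epsilon> k q"
    then have wW: "w \<in> Wset \<gamma> \<epsilon> k q" and "objf \<delta> \<epsilon> q w \<le> objf \<delta> \<epsilon> q v"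
      using v by (auto simp: What_def Wlam_def)
    then have "(\<Sum>i\<in>idxset \<epsilon> q. (1 - lam * Dlt \<gamma> i) * (w i - v i)\<^sup>2) \<le> 0"
      using objf_diff_of_Wlam[OF wW v] by simp
    moreover have "0 \<le> (\<Sum>i\<in>idxset \<epsilon> q. (1 - lam * Dlt \<gamma> i) * (w i - v i)\<^sup>2)"
      using terms_nonneg by (simp add: sum_nonneg)
    ultimately have "\<forall>i\<in>idxset \<epsilon> q. (1 - lam * Dlt \<gamma> i) * (w i - v i)\<^sup>2 = 0"
      using terms_nonneg by (simp add: sum_nonneg_eq_0_iff)
    then have "\<forall>i\<in>idxset \<epsilon> q. (1 - lam * Dlt \<gamma> i) * w i = (1 - lam * Dlt \<gamma> i) * v i"
      by auto
    with v wW show "w \<in> Wlam \<gamma> \<delta> \<epsilon> k q lam"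
      by (simp add: Wlam_def)
  qed
  show "Wlam \<gamma> \<delta> \<epsilon> k q lam \<subseteq> What \<gamma> \<delta> \<epsilon> k q"
  proof
    fix w assume w: "w \<in> Wlam \<gamma> \<delta> \<epsilon> k q lam"
    have "objf \<delta> \<epsilon> q w \<le> objf \<delta> \<epsilon> q u" if "u \<in> Wset \<gamma> \<epsilon> k q" for u
    proof -
      have "0 \<le> (\<Sum>i\<in>idxset \<epsilon> q. (1 - lam * Dlt \<gamma> i) * (u i - w i)\<^sup>2)"
        using terms_nonneg by (simp add: sum_nonneg)
      then show ?thesis
        using objf_diff_of_Wlam[OF that w] by simp
    qed
    with w show "w \<in> What \<gamma> \<delta> \<epsilon> k q"
      by (simp add: What_def Wlam_def)
  qed
qed

definition pivot_z :: "(nat \<Rightarrow> real) \<Rightarrow> (nat \<Rightarrow> real) \<Rightarrow> nat \<Rightarrow> nat \<Rightarrow> real" where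
  "pivot_z \<gamma> \<delta> j i = inverse (1 - \<gamma> i / \<gamma> j) * \<delta> i"

definition pivot_f :: "(nat \<Rightarrow> real) \<Rightarrow> (nat \<Rightarrow> real) \<Rightarrow> real \<Rightarrow> real \<Rightarrow> nat \<Rightarrow> nat \<Rightarrow> real" where
  "pivot_f \<gamma> \<delta> \<epsilon> k q j =
     (\<Sum>i\<in>{1..q}-{j}. \<gamma> i * (pivot_z \<gamma> \<delta> j i)\<^sup>2) + 2 * \<epsilon> * (\<epsilon> * inverse (\<gamma> j)) - k"

lemma stationarity_at_pivot_iff:
  assumes j: "j \<in> {1..q}" and gj: "\<gamma> j \<noteq> 0" and distinct: "\<forall>i\<in>{1..q}-{j}. \<gamma> i \<noteq> \<gamma> j"
  shows "(\<forall>i\<in>idxset \<epsilon> q.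
            (1 - inverse (\<gamma> j) * Dlt \<gamma> i) * w i = w0vec \<delta> q i + inverse (\<gamma> j) * dvec \<epsilon> i)
    \<longleftrightarrow> (\<epsilon> > 0 \<longrightarrow> w 0 = \<epsilon> * inverse (\<gamma> j)) \<and> \<delta> j = 0 \<and> (\<forall>i\<in>{1..q}-{j}. w i = pivot_z \<gamma> \<delta> j i)"
    (is "(\<forall>i\<in>idxset \<epsilon> q. ?P i) \<longleftrightarrow> _")
proof -
  have at_0: "?P 0 \<longleftrightarrow> w 0 = \<epsilon> * inverse (\<gamma> j)"
    by (simp add: Dlt_def w0vec_def dvec_def mult.commute)
  have at_j: "?P j \<longleftrightarrow> \<delta> j = 0"
    using j gj by (simp add: Dlt_def w0vec_def dvec_def)
  have off_pivot: "?P i \<longleftrightarrow> w i = pivot_z \<gamma> \<delta> j i" if i: "i \<in> {1..q}-{j}" for i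
  proof -
    have "1 - inverse (\<gamma> j) * \<gamma> i \<noteq> 0"
      using distinct i gj by (auto simp: field_simps)
    moreover have "1 - inverse (\<gamma> j) * \<gamma> i = 1 - \<gamma> i / \<gamma> j"
      by (simp add: divide_inverse mult.commute)
    ultimately show ?thesis
      using i by (auto simp: Dlt_def w0vec_def dvec_def pivot_z_def field_simps)
  qed
  have "idxset \<epsilon> q = (if \<epsilon> > 0 then insert 0 {1..q} else {1..q})"
    by (auto simp: idxset_def)
  moreover have "{1..q} = insert j ({1..q}-{j})"
    using j by blast
  ultimately have "(\<forall>i\<in>idxset \<epsilon> q. ?P i)
      \<longleftrightarrow> (\<epsilon> > 0 \<longrightarrow> ?P 0) \<and> ?P j \<and> (\<forall>i\<in>{1..q}-{j}. ?P i)"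
    by (smt (verit) ball_simps(7) insert_iff)
  then show ?thesis
    using at_0 at_j off_pivot by simp
qed

lemma Qstar_at_pivot:
  assumes "\<epsilon> \<ge> 0" and j: "j \<in> {1..q}"
    and "\<epsilon> > 0 \<longrightarrow> w 0 = \<epsilon> * inverse (\<gamma> j)" and "\<forall>i\<in>{1..q}-{j}. w i = pivot_z \<gamma> \<delta> j i"
  shows "Qstar \<gamma> \<epsilon> k q w = \<gamma> j * (w j)\<^sup>2 + pivot_f \<gamma> \<delta> \<epsilon> k q j"
proof -
  have "(\<Sum>i=1..q. \<gamma> i * (w i)\<^sup>2) = \<gamma> j * (w j)\<^sup>2 + (\<Sum>i\<in>{1..q}-{j}. \<gamma> i * (w i)\<^sup>2)"
    using j by (simp add: sum.remove)
  also have "(\<Sum>i\<in>{1..q}-{j}. \<gamma> i * (w i)\<^sup>2) = (\<Sum>i\<in>{1..q}-{j}. \<gamma> i * (pivot_z \<gamma> \<delta> j i)\<^sup>2)"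
    using assms(4) by (intro sum.cong) auto
  moreover have "\<epsilon> * w 0 = \<epsilon> * (\<epsilon> * inverse (\<gamma> j))"
    using assms(1,3) by (cases "\<epsilon> > 0") auto
  ultimately show ?thesis
    using Qstar_explicit[OF assms(1)] by (simp add: pivot_f_def)
qed

lemma Wlam_at_pivot:
  assumes "\<epsilon> \<ge> 0" and j: "j \<in> {1..q}" and gj: "\<gamma> j \<noteq> 0"
    and distinct: "\<forall>i\<in>{1..q}-{j}. \<gamma> i \<noteq> \<gamma> j"
  shows "Wlam \<gamma> \<delta> \<epsilon> k q (inverse (\<gamma> j)) =
    {w \<in> wspace \<epsilon> q. \<delta> j = 0 \<and> (\<epsilon> > 0 \<longrightarrow> w 0 = \<epsilon> * inverse (\<gamma> j)) \<and>
       (\<forall>i\<in>{1..q}-{j}. w i = pivot_z \<gamma> \<delta> j i) \<and> (w j)\<^sup>2 = - pivot_f \<gamma> \<delta> \<epsilon> k q j / \<gamma> j}"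
proof -
  have solve: "\<gamma> j * t + pivot_f \<gamma> \<delta> \<epsilon> k q j = 0 \<longleftrightarrow> t = - pivot_f \<gamma> \<delta> \<epsilon> k q j / \<gamma> j" for t
    using gj by (auto simp: field_simps)
  show ?thesis
  proof (intro set_eqI)
    fix w
    let ?centre = "(\<epsilon> > 0 \<longrightarrow> w 0 = \<epsilon> * inverse (\<gamma> j)) \<and> (\<forall>i\<in>{1..q}-{j}. w i = pivot_z \<gamma> \<delta> j i)"
    have "w \<in> Wlam \<gamma> \<delta> \<epsilon> k q (inverse (\<gamma> j))
        \<longleftrightarrow> w \<in> wspace \<epsilon> q \<and> Qstar \<gamma> \<epsilon> k q w = 0 \<and> \<delta> j = 0 \<and> ?centre"
      using stationarity_at_pivot_iff[OF j gj distinct, of \<epsilon> w \<delta>]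
      by (auto simp: Wlam_def Wset_def)
    also have "\<dots> \<longleftrightarrow> w \<in> wspace \<epsilon> q \<and> \<delta> j = 0 \<and> ?centre \<and> (w j)\<^sup>2 = - pivot_f \<gamma> \<delta> \<epsilon> k q j / \<gamma> j"
      using Qstar_at_pivot[OF assms(1) j, of w \<gamma> \<delta> k] solve[of "(w j)\<^sup>2"] by auto
    finally show "w \<in> Wlam \<gamma> \<delta> \<epsilon> k q (inverse (\<gamma> j)) \<longleftrightarrow> w \<in> {w \<in> wspace \<epsilon> q. \<delta> j = 0 \<and>
       (\<epsilon> > 0 \<longrightarrow> w 0 = \<epsilon> * inverse (\<gamma> j)) \<and> (\<forall>i\<in>{1..q}-{j}. w i = pivot_z \<gamma> \<delta> j i) \<and>
       (w j)\<^sup>2 = - pivot_f \<gamma> \<delta> \<epsilon> k q j / \<gamma> j}"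
      by auto
  qed
qed

lemma Wlam_at_pivot_nonempty_iff:
  assumes "\<epsilon> \<ge> 0" and j: "j \<in> {1..q}" and "\<gamma> j \<noteq> 0"
    and "\<forall>i\<in>{1..q}-{j}. \<gamma> i \<noteq> \<gamma> j"
  shows "Wlam \<gamma> \<delta> \<epsilon> k q (inverse (\<gamma> j)) \<noteq> {} \<longleftrightarrow> \<delta> j = 0 \<and> 0 \<le> - pivot_f \<gamma> \<delta> \<epsilon> k q j / \<gamma> j"
proof
  assume "Wlam \<gamma> \<delta> \<epsilon> k q (inverse (\<gamma> j)) \<noteq> {}"
  then obtain w where "\<delta> j = 0" and "(w j)\<^sup>2 = - pivot_f \<gamma> \<delta> \<epsilon> k q j / \<gamma> j"
    unfolding Wlam_at_pivot[OF assms] by blast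
  then show "\<delta> j = 0 \<and> 0 \<le> - pivot_f \<gamma> \<delta> \<epsilon> k q j / \<gamma> j"
    by (metis zero_le_power2)
next
  assume solvable: "\<delta> j = 0 \<and> 0 \<le> - pivot_f \<gamma> \<delta> \<epsilon> k q j / \<gamma> j"
  define w where "w i = (if i = 0 then (if \<epsilon> > 0 then \<epsilon> * inverse (\<gamma> j) else 0)
      else if i = j then sqrt (- pivot_f \<gamma> \<delta> \<epsilon> k q j / \<gamma> j)
      else if i \<le> q then pivot_z \<gamma> \<delta> j i else 0)" for i
  have "w \<in> wspace \<epsilon> q"
    using j by (auto simp: wspace_def idxset_def w_def)
  moreover have "(w j)\<^sup>2 = - pivot_f \<gamma> \<delta> \<epsilon> k q j / \<gamma> j"
    using solvable j by (simp add: w_def)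
  moreover have "\<forall>i\<in>{1..q}-{j}. w i = pivot_z \<gamma> \<delta> j i"
    by (simp add: w_def)
  ultimately have "w \<in> Wlam \<gamma> \<delta> \<epsilon> k q (inverse (\<gamma> j))"
    unfolding Wlam_at_pivot[OF assms] using solvable by (simp add: w_def)
  then show "Wlam \<gamma> \<delta> \<epsilon> k q (inverse (\<gamma> j)) \<noteq> {}"
    by blast
qed

lemma What_eq_Wlam_at_extremal_pivot:
  assumes "\<epsilon> \<ge> 0" and j: "j \<in> {1..q}" and gj: "\<gamma> j \<noteq> 0"
    and extremal: "\<forall>i\<in>{1..q}-{j}. \<gamma> i / \<gamma> j < 1"
    and "\<delta> j = 0" and "0 \<le> - pivot_f \<gamma> \<delta> \<epsilon> k q j / \<gamma> j"
  shows "What \<gamma> \<delta> \<epsilon> k q = Wlam \<gamma> \<delta> \<epsilon> k q (inverse (\<gamma> j))"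
proof (rule What_eq_Wlam)
  have "\<forall>i\<in>{1..q}-{j}. \<gamma> i \<noteq> \<gamma> j"
    using extremal gj by (metis divide_self less_irrefl)
  from Wlam_at_pivot_nonempty_iff[OF assms(1) j gj this] assms(5,6)
  show "Wlam \<gamma> \<delta> \<epsilon> k q (inverse (\<gamma> j)) \<noteq> {}"
    by blast
  show "\<forall>i\<in>idxset \<epsilon> q. 0 \<le> 1 - inverse (\<gamma> j) * Dlt \<gamma> i"
  proof
    fix i assume "i \<in> idxset \<epsilon> q"
    then have "i = 0 \<or> i = j \<or> i \<in> {1..q}-{j}"
      by (auto simp: idxset_def split: if_splits)
    then show "0 \<le> 1 - inverse (\<gamma> j) * Dlt \<gamma> i"
    proof (elim disjE)
      assume "i \<in> {1..q}-{j}"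
      with extremal have "\<gamma> i / \<gamma> j < 1" and "i \<noteq> 0"
        by auto
      then show ?thesis
        by (simp add: Dlt_def divide_inverse mult.commute)
    qed (use gj in \<open>auto simp: Dlt_def\<close>)
  qed
qed

lemma minimisers_at_gamma_1:
  assumes q: "q \<ge> 1" and eps: "\<epsilon> \<ge> 0" and g1: "\<gamma> 1 > 0" and below: "\<forall>i\<in>{2..q}. \<gamma> i < \<gamma> 1"
  shows "(Wlam \<gamma> \<delta> \<epsilon> k q (inverse (\<gamma> 1)) \<noteq> {} \<longleftrightarrow> \<delta> 1 = 0 \<and> f1 \<gamma> \<delta> \<epsilon> k q \<le> 0) \<and>
    (\<delta> 1 = 0 \<and> f1 \<gamma> \<delta> \<epsilon> k q \<le> 0 \<longrightarrow>
       What \<gamma> \<delta> \<epsilon> k q = Wlam \<gamma> \<delta> \<epsilon> k q (inverse (\<gamma> 1)) \<and>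
       Wlam \<gamma> \<delta> \<epsilon> k q (inverse (\<gamma> 1)) =
         {w \<in> wspace \<epsilon> q. (\<epsilon> > 0 \<longrightarrow> w 0 = yhat1 \<gamma> \<epsilon>) \<and>
            (w 1)\<^sup>2 = - f1 \<gamma> \<delta> \<epsilon> k q / \<gamma> 1 \<and>
            (\<forall>i\<in>{2..q}. w i = zhat1 \<gamma> \<delta> i)})"
proof -
  have j: "1 \<in> {1..q}" and others: "{1..q}-{1} = {2..q}" and g1': "\<gamma> 1 \<noteq> 0"
    using q g1 by auto
  have extremal: "\<forall>i\<in>{1..q}-{1}. \<gamma> i / \<gamma> 1 < 1"
    unfolding others using below g1 by simp
  have distinct: "\<forall>i\<in>{1..q}-{1}. \<gamma> i \<noteq> \<gamma> 1"
    unfolding others using below by fastforce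
  have f: "pivot_f \<gamma> \<delta> \<epsilon> k q 1 = f1 \<gamma> \<delta> \<epsilon> k q"
    unfolding pivot_f_def f1_def others by (simp add: pivot_z_def zhat1_def yhat1_def)
  have sign: "0 \<le> - f1 \<gamma> \<delta> \<epsilon> k q / \<gamma> 1 \<longleftrightarrow> f1 \<gamma> \<delta> \<epsilon> k q \<le> 0"
    using g1 by (simp add: divide_le_eq)
  show ?thesis
    using Wlam_at_pivot_nonempty_iff[OF eps j g1' distinct, of \<delta> k]
      What_eq_Wlam_at_extremal_pivot[OF eps j g1' extremal, of \<delta> k]
      Wlam_at_pivot[OF eps j g1' distinct, of \<delta> k]
    unfolding f sign others by (auto simp: pivot_z_def zhat1_def yhat1_def)
qed

lemma minimisers_at_gamma_q:
  assumes q: "q \<ge> 1" and eps: "\<epsilon> \<ge> 0" and gq: "\<gamma> q < 0" and above: "\<forall>i\<in>{1..q-1}. \<gamma> q < \<gamma> i"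
  shows "(Wlam \<gamma> \<delta> \<epsilon> k q (inverse (\<gamma> q)) \<noteq> {} \<longleftrightarrow> \<delta> q = 0 \<and> fq \<gamma> \<delta> \<epsilon> k q \<ge> 0) \<and>
      (\<delta> q = 0 \<and> fq \<gamma> \<delta> \<epsilon> k q \<ge> 0 \<longrightarrow>
         What \<gamma> \<delta> \<epsilon> k q = Wlam \<gamma> \<delta> \<epsilon> k q (inverse (\<gamma> q)) \<and>
         Wlam \<gamma> \<delta> \<epsilon> k q (inverse (\<gamma> q)) =
           {w \<in> wspace \<epsilon> q. (\<epsilon> > 0 \<longrightarrow> w 0 = yhatq \<gamma> \<epsilon> q) \<and>
              (\<forall>i\<in>{1..q-1}. w i = zhatq \<gamma> \<delta> q i) \<and>
              (w q)\<^sup>2 = fq \<gamma> \<delta> \<epsilon> k q / (- \<gamma> q)})"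
proof -
  have j: "q \<in> {1..q}" and others: "{1..q}-{q} = {1..q-1}" and gq': "\<gamma> q \<noteq> 0"
    using q gq by auto
  have extremal: "\<forall>i\<in>{1..q}-{q}. \<gamma> i / \<gamma> q < 1"
    unfolding others using above gq by (simp add: divide_less_eq)
  have distinct: "\<forall>i\<in>{1..q}-{q}. \<gamma> i \<noteq> \<gamma> q"
    unfolding others using above by fastforce
  have f: "pivot_f \<gamma> \<delta> \<epsilon> k q q = fq \<gamma> \<delta> \<epsilon> k q"
    unfolding pivot_f_def fq_def others by (simp add: pivot_z_def zhatq_def yhatq_def)
  have sign: "0 \<le> - fq \<gamma> \<delta> \<epsilon> k q / \<gamma> q \<longleftrightarrow> fq \<gamma> \<delta> \<epsilon> k q \<ge> 0"
    using gq by (simp add: divide_le_0_iff)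
  have "- fq \<gamma> \<delta> \<epsilon> k q / \<gamma> q = fq \<gamma> \<delta> \<epsilon> k q / (- \<gamma> q)"
    by simp
  then show ?thesis
    using Wlam_at_pivot_nonempty_iff[OF eps j gq' distinct, of \<delta> k]
      What_eq_Wlam_at_extremal_pivot[OF eps j gq' extremal, of \<delta> k]
      Wlam_at_pivot[OF eps j gq' distinct, of \<delta> k]
    unfolding f sign others by (auto simp: pivot_z_def zhatq_def yhatq_def)
qed

theorem proposition8p3:
  fixes \<gamma> \<delta> :: "nat \<Rightarrow> real" and \<epsilon> k :: real and q :: nat
  assumes q1: "q \<ge> 1"
    and gdec: "\<forall>i j. 1 \<le> i \<longrightarrow> i < j \<longrightarrow> j \<le> q \<longrightarrow> \<gamma> j < \<gamma> i"
    and gnz: "\<forall>i\<in>{1..q}. \<gamma> i \<noteq> 0"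
    and g1: "\<gamma> 1 > 0"
    and dnn: "\<forall>i\<in>{1..q}. \<delta> i \<ge> 0"
    and eps: "\<epsilon> \<ge> 0"
    and Wne: "Wset \<gamma> \<epsilon> k q \<noteq> {}"
  shows
   "(Wlam \<gamma> \<delta> \<epsilon> k q (inverse (\<gamma> 1)) \<noteq> {} \<longleftrightarrow> \<delta> 1 = 0 \<and> f1 \<gamma> \<delta> \<epsilon> k q \<le> 0) \<and>
    (\<delta> 1 = 0 \<and> f1 \<gamma> \<delta> \<epsilon> k q \<le> 0 \<longrightarrow>
       What \<gamma> \<delta> \<epsilon> k q = Wlam \<gamma> \<delta> \<epsilon> k q (inverse (\<gamma> 1)) \<and>
       Wlam \<gamma> \<delta> \<epsilon> k q (inverse (\<gamma> 1)) =
         {w \<in> wspace \<epsilon> q. (\<epsilon> > 0 \<longrightarrow> w 0 = yhat1 \<gamma> \<epsilon>) \<and>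
            (w 1)\<^sup>2 = - f1 \<gamma> \<delta> \<epsilon> k q / \<gamma> 1 \<and>
            (\<forall>i\<in>{2..q}. w i = zhat1 \<gamma> \<delta> i)}) \<and>
    (\<gamma> q < 0 \<longrightarrow>
      (Wlam \<gamma> \<delta> \<epsilon> k q (inverse (\<gamma> q)) \<noteq> {} \<longleftrightarrow> \<delta> q = 0 \<and> fq \<gamma> \<delta> \<epsilon> k q \<ge> 0) \<and>
      (\<delta> q = 0 \<and> fq \<gamma> \<delta> \<epsilon> k q \<ge> 0 \<longrightarrow>
         What \<gamma> \<delta> \<epsilon> k q = Wlam \<gamma> \<delta> \<epsilon> k q (inverse (\<gamma> q)) \<and>
         Wlam \<gamma> \<delta> \<epsilon> k q (inverse (\<gamma> q)) =
           {w \<in> wspace \<epsilon> q. (\<epsilon> > 0 \<longrightarrow> w 0 = yhatq \<gamma> \<epsilon> q) \<and>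
              (\<forall>i\<in>{1..q-1}. w i = zhatq \<gamma> \<delta> q i) \<and>
              (w q)\<^sup>2 = fq \<gamma> \<delta> \<epsilon> k q / (- \<gamma> q)}))"
proof -
  have below: "\<forall>i\<in>{2..q}. \<gamma> i < \<gamma> 1" and above: "\<forall>i\<in>{1..q-1}. \<gamma> q < \<gamma> i"
    using gdec q1 by auto
  note top = minimisers_at_gamma_1[of q \<epsilon> \<gamma>, OF q1 eps g1 below]
  note bottom = impI[OF minimisers_at_gamma_q[of q \<epsilon> \<gamma>, OF q1 eps _ above]]
  show ?thesis
    using conjunct1[OF top] conjunct2[OF top] bottom by (intro conjI)
qed

end
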